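(* Let $v\in\Sigma^*$, let $u$ be a $v$-minimal word, $i\in\mathrm{supp}(u)$, and let $w$ be a word that $u$-represents $g\in\mathcal{I}_i$. Then for any $a,b\in\Sigma^*$ the word $awb$ $u$-represents $\theta_i(a)\,g\,\theta_i(b)$.
   Context: Let $\mathcal{A}=\langle Q,\Sigma,\delta\rangle$ be a synchronizing automaton with $n$ states $q_1,\dots,q_n$; write $q\cdot u$ for the action of $u\in\Sigma^*$ and $\mathrm{rk}(u)=|Q\cdot u|$. Each word acts linearly on $\mathbb{C}Q$ by $q\mapsto q\cdot u$, preserving $w^\perp=\{x:\langle x,q_1+\dots+q_n\rangle=0\}$; let $\rho:\Sigma^*\to\mathbb{M}_{n-1}(\mathbb{C})$ be the induced representation, $\mathcal{R}$ the $\mathbb{C}$-algebra generated by $\rho(\Sigma^* )$. Write $\mathcal{R}/\mathrm{Rad}(\mathcal{R})\cong\prod_{i=1}^k\mathbb{M}_{n_i}(\mathbb{C})$ (Jacobson radical, Wedderburn–Artin) and let $\theta_i:\Sigma^*\to\mathbb{M}_{n_i}(\mathbb{C})$ be $\rho$ followed by the quotient map and the $i$-th projection; $0_i$ is the zero matrix. The monoid $\theta_i(\Sigma^* )$ has a unique $0$-minimal ideal $\mathcal{I}_i$. The support of a word $z$ is $\mathrm{supp}(z)=\{i:\theta_i(z)\neq0_i\}$. For $v\in\Sigma^*$, a word $u\in\Sigma^*v\Sigma^*$ is $v$-minimal if $\mathrm{supp}(u)\neq\emptyset$ and there is no $z\in\Sigma^*v\Sigma^*$ with $\emptyset\neq\mathrm{supp}(z)\subsetneq\mathrm{supp}(u)$.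 For such $u$, $i\in\mathrm{supp}(u)$ and $g\in\mathcal{I}_i$, a word $w$ $u$-represents $g$ if $w\in\Sigma^*u\Sigma^*$, $\theta_i(w)=g$, and either $g=0_i$ or $\mathrm{rk}(w)$ is minimum among all words $w'\in\Sigma^*u\Sigma^*$ with $\theta_i(w')=g$. *)

theory Defs
  imports Main "Jordan_Normal_Form.Matrix"
begin

definition act :: "('q \<Rightarrow> 'a \<Rightarrow> 'q) \<Rightarrow> 'q \<Rightarrow> 'a list \<Rightarrow> 'q" where
  "act \<delta> q w = foldl \<delta> q w"

definition rk :: "('q::finite \<Rightarrow> 'a \<Rightarrow> 'q) \<Rightarrow> 'a list \<Rightarrow> nat" where
  "rk \<delta> w = card ((\<lambda>q. act \<delta> q w) ` UNIV)"

definition synchronizing :: "('q::finite \<Rightarrow> 'a \<Rightarrow> 'q) \<Rightarrow> bool" where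
  "synchronizing \<delta> \<longleftrightarrow> (\<exists>w. rk \<delta> w = 1)"

type_synonym 'q cvec = "'q \<Rightarrow> complex"
type_synonym 'q cop = "'q cvec \<Rightarrow> 'q cvec"

text \<open>Linear action of a word on CQ (right action): x . w\<close>
definition vact :: "('q::finite \<Rightarrow> 'a \<Rightarrow> 'q) \<Rightarrow> 'a list \<Rightarrow> 'q cvec \<Rightarrow> 'q cvec" where
  "vact \<delta> w x = (\<lambda>p. \<Sum>q\<in>{q. act \<delta> q w = p}. x q)"

definition Wperp :: "('q::finite) cvec set" where
  "Wperp = {x. (\<Sum>q\<in>UNIV. x q) = 0}"

text \<open>Endomorphisms of Wperp are represented as functions that vanish outside Wperp.\<close>
definition rho :: "('q::finite \<Rightarrow> 'a \<Rightarrow> 'q) \<Rightarrow> 'a list \<Rightarrow> 'q cop" where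
  "rho \<delta> w = (\<lambda>x. if x \<in> Wperp then vact \<delta> w x else (\<lambda>_. 0))"

definition op_zero :: "'q cop" where "op_zero = (\<lambda>x p. 0)"
definition op_add :: "'q cop \<Rightarrow> 'q cop \<Rightarrow> 'q cop" where
  "op_add f g = (\<lambda>x p. f x p + g x p)"
definition op_smult :: "complex \<Rightarrow> 'q cop \<Rightarrow> 'q cop" where
  "op_smult c f = (\<lambda>x p. c * f x p)"
text \<open>Product compatible with the right action: x (f g) = (x f) g, so rho (u v) = rho u * rho v.\<close>
definition op_mult :: "'q cop \<Rightarrow> 'q cop \<Rightarrow> 'q cop" where
  "op_mult f g = g \<circ> f"
definition op_one :: "'q::finite cop" where
  "op_one = (\<lambda>x. if x \<in> Wperp then x else (\<lambda>_. 0))"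
definition op_minus :: "'q cop \<Rightarrow> 'q cop \<Rightarrow> 'q cop" where
  "op_minus f g = (\<lambda>x p. f x p - g x p)"

inductive_set alg :: "('q::finite \<Rightarrow> 'a \<Rightarrow> 'q) \<Rightarrow> 'q cop set" for \<delta> where
  gen: "rho \<delta> w \<in> alg \<delta>"
| zero: "op_zero \<in> alg \<delta>"
| add: "f \<in> alg \<delta> \<Longrightarrow> g \<in> alg \<delta> \<Longrightarrow> op_add f g \<in> alg \<delta>"
| smult: "f \<in> alg \<delta> \<Longrightarrow> op_smult c f \<in> alg \<delta>"
| mult: "f \<in> alg \<delta> \<Longrightarrow> g \<in> alg \<delta> \<Longrightarrow> op_mult f g \<in> alg \<delta>"

text \<open>Jacobson radical of the unital algebra R (unit = rho [] = op_one):
  x such that 1 - r x is invertible in R for every r in R.\<close>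
definition jrad :: "('q::finite \<Rightarrow> 'a \<Rightarrow> 'q) \<Rightarrow> 'q cop set" where
  "jrad \<delta> = {x \<in> alg \<delta>. \<forall>r\<in>alg \<delta>. \<exists>y\<in>alg \<delta>.
      op_mult y (op_minus op_one (op_mult r x)) = op_one \<and>
      op_mult (op_minus op_one (op_mult r x)) y = op_one}"

text \<open>phi = (Wedderburn-Artin isomorphism R/Rad(R) \<cong> prod_{i<k} M_{n_i}(C)) composed with
  the quotient map: a surjective unital algebra homomorphism R \<rightarrow> prod_{i<k} M_{n_i}(C)
  whose kernel is Rad(R).\<close>
definition wedderburn :: "('q::finite \<Rightarrow> 'a \<Rightarrow> 'q) \<Rightarrow> nat \<Rightarrow> (nat \<Rightarrow> nat)
    \<Rightarrow> ('q cop \<Rightarrow> nat \<Rightarrow> complex mat) \<Rightarrow> bool" where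
  "wedderburn \<delta> k ns \<phi> \<longleftrightarrow>
     (\<forall>i<k. ns i \<ge> 1) \<and>
     (\<forall>x\<in>alg \<delta>. \<forall>i<k. \<phi> x i \<in> carrier_mat (ns i) (ns i)) \<and>
     (\<forall>x\<in>alg \<delta>. \<forall>y\<in>alg \<delta>. \<forall>i<k. \<phi> (op_add x y) i = \<phi> x i + \<phi> y i) \<and>
     (\<forall>x\<in>alg \<delta>. \<forall>c. \<forall>i<k. \<phi> (op_smult c x) i = c \<cdot>\<^sub>m \<phi> x i) \<and>
     (\<forall>x\<in>alg \<delta>. \<forall>y\<in>alg \<delta>. \<forall>i<k. \<phi> (op_mult x y) i = \<phi> x i * \<phi> y i) \<and>
     (\<forall>i<k. \<phi> op_one i = 1\<^sub>m (ns i)) \<and>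
     (\<forall>M. (\<forall>i<k. M i \<in> carrier_mat (ns i) (ns i)) \<longrightarrow>
          (\<exists>x\<in>alg \<delta>. \<forall>i<k. \<phi> x i = M i)) \<and>
     (\<forall>x\<in>alg \<delta>. (\<forall>i<k. \<phi> x i = 0\<^sub>m (ns i) (ns i)) \<longleftrightarrow> x \<in> jrad \<delta>)"

definition theta :: "('q::finite \<Rightarrow> 'a \<Rightarrow> 'q) \<Rightarrow> ('q cop \<Rightarrow> nat \<Rightarrow> complex mat)
    \<Rightarrow> nat \<Rightarrow> 'a list \<Rightarrow> complex mat" where
  "theta \<delta> \<phi> i w = \<phi> (rho \<delta> w) i"

definition mon_ideal :: "complex mat set \<Rightarrow> complex mat set \<Rightarrow> bool" where
  "mon_ideal M J \<longleftrightarrow> J \<noteq> {} \<and> J \<subseteq> M \<and> (\<forall>s\<in>M. \<forall>t\<in>M. \<forall>x\<in>J. s * x * t \<in> J)"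

definition zero_minimal_ideal :: "complex mat set \<Rightarrow> complex mat \<Rightarrow> complex mat set \<Rightarrow> bool" where
  "zero_minimal_ideal M z I \<longleftrightarrow> mon_ideal M I \<and> z \<in> I \<and> I \<noteq> {z} \<and>
     (\<forall>J. mon_ideal M J \<longrightarrow> J \<subseteq> I \<longrightarrow> J = {z} \<or> J = I)"

definition factors :: "'a list \<Rightarrow> 'a list set" where
  "factors v = {x @ v @ y | x y. True}"

definition supp :: "('q::finite \<Rightarrow> 'a \<Rightarrow> 'q) \<Rightarrow> nat \<Rightarrow> (nat \<Rightarrow> nat)
    \<Rightarrow> ('q cop \<Rightarrow> nat \<Rightarrow> complex mat) \<Rightarrow> 'a list \<Rightarrow> nat set" where
  "supp \<delta> k ns \<phi> z = {i. i < k \<and> theta \<delta> \<phi> i z \<noteq> 0\<^sub>m (ns i) (ns i)}"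

definition v_minimal :: "('q::finite \<Rightarrow> 'a \<Rightarrow> 'q) \<Rightarrow> nat \<Rightarrow> (nat \<Rightarrow> nat)
    \<Rightarrow> ('q cop \<Rightarrow> nat \<Rightarrow> complex mat) \<Rightarrow> 'a list \<Rightarrow> 'a list \<Rightarrow> bool" where
  "v_minimal \<delta> k ns \<phi> v u \<longleftrightarrow> u \<in> factors v \<and> supp \<delta> k ns \<phi> u \<noteq> {} \<and>
     \<not> (\<exists>z\<in>factors v. supp \<delta> k ns \<phi> z \<noteq> {} \<and> supp \<delta> k ns \<phi> z \<subset> supp \<delta> k ns \<phi> u)"

definition u_represents :: "('q::finite \<Rightarrow> 'a \<Rightarrow> 'q) \<Rightarrow> (nat \<Rightarrow> nat)
    \<Rightarrow> ('q cop \<Rightarrow> nat \<Rightarrow> complex mat) \<Rightarrow> 'a list \<Rightarrow> nat \<Rightarrow> complex mat set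
    \<Rightarrow> 'a list \<Rightarrow> complex mat \<Rightarrow> bool" where
  "u_represents \<delta> ns \<phi> u i I w g \<longleftrightarrow> g \<in> I \<and> w \<in> factors u \<and> theta \<delta> \<phi> i w = g \<and>
     (g = 0\<^sub>m (ns i) (ns i) \<or>
      (\<forall>w'\<in>factors u. theta \<delta> \<phi> i w' = g \<longrightarrow> rk \<delta> w \<le> rk \<delta> w'))"

end

theory Submission
  imports Defs
begin

text \<open>Extending a word on both sides keeps it a factor of the same word, can only lower its
  rank, and (theta being a monoid homomorphism) multiplies its image on both sides. What needs
  an argument is minimality of the rank: if h = theta(a) g theta(b) is nonzero, the
  0-minimality of the ideal forces g = theta(c) h theta(d), so every w' representing h yields
  the representative c w' d of g, whose rank is at least rk(w) and at most rk(w').\<close>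

lemma act_append: "act \<delta> q (x @ y) = act \<delta> (act \<delta> q x) y"
  unfolding act_def by simp

lemma act_Nil: "act \<delta> q [] = q"
  unfolding act_def by simp

lemma vact_append:
  fixes \<delta> :: "'q::finite \<Rightarrow> 'a \<Rightarrow> 'q"
  shows "vact \<delta> y (vact \<delta> x z) = vact \<delta> (x @ y) z"
proof
  fix p
  have "vact \<delta> y (vact \<delta> x z) p =
      (\<Sum>q\<in>{q. act \<delta> q y = p}. \<Sum>r\<in>{r. r \<in> {r. act \<delta> (act \<delta> r x) y = p} \<and> act \<delta> r x = q}. z r)"
    unfolding vact_def by (rule sum.cong) (auto intro!: sum.cong)
  also have "\<dots> = (\<Sum>r\<in>{r. act \<delta> (act \<delta> r x) y = p}. z r)"
    by (rule sum.group) auto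
  finally show "vact \<delta> y (vact \<delta> x z) p = vact \<delta> (x @ y) z p"
    unfolding vact_def act_append .
qed

lemma vact_in_Wperp_iff:
  fixes \<delta> :: "'q::finite \<Rightarrow> 'a \<Rightarrow> 'q"
  shows "vact \<delta> x z \<in> Wperp \<longleftrightarrow> z \<in> Wperp"
proof -
  have "(\<Sum>p\<in>UNIV. vact \<delta> x z p) = (\<Sum>p\<in>UNIV. \<Sum>r\<in>{r. r \<in> UNIV \<and> act \<delta> r x = p}. z r)"
    unfolding vact_def by simp
  also have "\<dots> = (\<Sum>r\<in>UNIV. z r)"
    by (rule sum.group) auto
  finally show ?thesis
    unfolding Wperp_def by simp
qed

lemma vact_zero: "vact \<delta> x (\<lambda>_. 0) = (\<lambda>_. 0)"
  unfolding vact_def by simp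

lemma zero_in_Wperp: "(\<lambda>_. 0) \<in> Wperp"
  unfolding Wperp_def by simp

lemma rho_append:
  fixes \<delta> :: "'q::finite \<Rightarrow> 'a \<Rightarrow> 'q"
  shows "rho \<delta> (x @ y) = op_mult (rho \<delta> x) (rho \<delta> y)"
proof
  fix z
  show "rho \<delta> (x @ y) z = op_mult (rho \<delta> x) (rho \<delta> y) z"
    by (cases "z \<in> Wperp")
      (simp_all add: op_mult_def rho_def vact_in_Wperp_iff vact_append zero_in_Wperp vact_zero)
qed

lemma rho_Nil:
  fixes \<delta> :: "'q::finite \<Rightarrow> 'a \<Rightarrow> 'q"
  shows "rho \<delta> [] = op_one"
proof -
  have vact_Nil: "vact \<delta> [] x = x" for x :: "'q cvec"
    unfolding vact_def act_Nil by simp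
  show ?thesis
    unfolding rho_def op_one_def by (rule ext) (simp add: vact_Nil)
qed

lemma rk_append_le:
  fixes \<delta> :: "'q::finite \<Rightarrow> 'a \<Rightarrow> 'q"
  shows "rk \<delta> (a @ w @ b) \<le> rk \<delta> w"
proof -
  have "(\<lambda>q. act \<delta> q (a @ w @ b)) ` UNIV \<subseteq> (\<lambda>p. act \<delta> p b) ` ((\<lambda>q. act \<delta> q w) ` UNIV)"
    by (auto simp: act_append)
  then have "card ((\<lambda>q. act \<delta> q (a @ w @ b)) ` UNIV)
      \<le> card ((\<lambda>p. act \<delta> p b) ` ((\<lambda>q. act \<delta> q w) ` UNIV))"
    by (intro card_mono) auto
  also have "\<dots> \<le> card ((\<lambda>q. act \<delta> q w) ` UNIV)"
    by (rule card_image_le) simp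
  finally show ?thesis
    unfolding rk_def .
qed

lemma append_in_factors: "w \<in> factors u \<Longrightarrow> a @ w @ b \<in> factors u"
  unfolding factors_def by auto (metis append.assoc)

lemma
  fixes \<delta> :: "'q::finite \<Rightarrow> 'a \<Rightarrow> 'q"
  assumes "wedderburn \<delta> k ns \<phi>" and "i < k"
  shows theta_carrier_mat: "theta \<delta> \<phi> i x \<in> carrier_mat (ns i) (ns i)"
    and theta_append: "theta \<delta> \<phi> i (x @ y) = theta \<delta> \<phi> i x * theta \<delta> \<phi> i y"
    and theta_Nil: "theta \<delta> \<phi> i [] = 1\<^sub>m (ns i)"
  using assms unfolding wedderburn_def theta_def rho_append rho_Nil by (auto simp: alg.gen)

lemma theta_append3:
  fixes \<delta> :: "'q::finite \<Rightarrow> 'a \<Rightarrow> 'q"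
  assumes "wedderburn \<delta> k ns \<phi>" and "i < k"
  shows "theta \<delta> \<phi> i (x @ y @ z) = theta \<delta> \<phi> i x * theta \<delta> \<phi> i y * theta \<delta> \<phi> i z"
  using assms by (simp add: theta_append assoc_mult_mat[OF theta_carrier_mat theta_carrier_mat
      theta_carrier_mat, OF assms assms assms])

lemma range_theta_submonoid:
  fixes \<delta> :: "'q::finite \<Rightarrow> 'a \<Rightarrow> 'q"
  assumes "wedderburn \<delta> k ns \<phi>" and "i < k"
  shows "range (theta \<delta> \<phi> i) \<subseteq> carrier_mat (ns i) (ns i)"
    and "1\<^sub>m (ns i) \<in> range (theta \<delta> \<phi> i)"
    and "\<And>s t. s \<in> range (theta \<delta> \<phi> i) \<Longrightarrow> t \<in> range (theta \<delta> \<phi> i)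
           \<Longrightarrow> s * t \<in> range (theta \<delta> \<phi> i)"
  using theta_carrier_mat[OF assms] theta_Nil[OF assms, symmetric]
  by (auto simp flip: theta_append[OF assms])

lemma mon_ideal_mult:
  assumes "mon_ideal M J" "s \<in> M" "t \<in> M" "x \<in> J"
  shows "s * x * t \<in> J"
  using assms unfolding mon_ideal_def by blast

lemma zero_minimal_ideal_eq_principal:
  assumes I: "zero_minimal_ideal M (0\<^sub>m n n) I"
    and M: "M \<subseteq> carrier_mat n n" "1\<^sub>m n \<in> M" "\<And>s t. s \<in> M \<Longrightarrow> t \<in> M \<Longrightarrow> s * t \<in> M"
    and h: "h \<in> I" "h \<noteq> 0\<^sub>m n n"
  shows "I = {s * h * t | s t. s \<in> M \<and> t \<in> M}"
proof -
  define J where "J = {s * h * t | s t. s \<in> M \<and> t \<in> M}"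
  have I_ideal: "mon_ideal M I"
    using I unfolding zero_minimal_ideal_def by simp
  then have h_carrier: "h \<in> carrier_mat n n"
    using h(1) M(1) unfolding mon_ideal_def by blast
  then have "h = 1\<^sub>m n * h * 1\<^sub>m n"
    by simp
  then have "h \<in> J"
    unfolding J_def using M(2) by blast
  have "J \<subseteq> I"
    using mon_ideal_mult[OF I_ideal _ _ h(1)] unfolding J_def by blast
  moreover have "mon_ideal M J"
    unfolding mon_ideal_def
  proof (intro conjI ballI)
    show "J \<noteq> {}" and "J \<subseteq> M"
      using \<open>h \<in> J\<close> \<open>J \<subseteq> I\<close> I_ideal unfolding mon_ideal_def by blast+
    fix s t x assume "s \<in> M" "t \<in> M" "x \<in> J"
    then obtain s' t' where x: "x = s' * h * t'" and "s' \<in> M" "t' \<in> M"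
      unfolding J_def by blast
    have "s \<in> carrier_mat n n" "t \<in> carrier_mat n n" "s' \<in> carrier_mat n n" "t' \<in> carrier_mat n n"
      using \<open>s \<in> M\<close> \<open>t \<in> M\<close> \<open>s' \<in> M\<close> \<open>t' \<in> M\<close> M(1) by blast+
    then have "s * x * t = (s * s') * h * (t' * t)"
      unfolding x using h_carrier by (simp add: assoc_mult_mat[of _ n n _ n _ n])
    then show "s * x * t \<in> J"
      unfolding J_def using M(3) \<open>s \<in> M\<close> \<open>t \<in> M\<close> \<open>s' \<in> M\<close> \<open>t' \<in> M\<close> by blast
  qed
  ultimately have "J = I"
    using I \<open>h \<in> J\<close> h(2) unfolding zero_minimal_ideal_def by blast
  then show ?thesis
    unfolding J_def by simp
qed

lemma theta_ideal_generator:
  fixes \<delta> :: "'q::finite \<Rightarrow> 'a \<Rightarrow> 'q"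
  assumes "wedderburn \<delta> k ns \<phi>" and "i < k"
    and "zero_minimal_ideal (range (theta \<delta> \<phi> i)) (0\<^sub>m (ns i) (ns i)) I"
    and "g \<in> I" "h \<in> I" "h \<noteq> 0\<^sub>m (ns i) (ns i)"
  obtains c d where "g = theta \<delta> \<phi> i c * h * theta \<delta> \<phi> i d"
  using zero_minimal_ideal_eq_principal[OF assms(3) range_theta_submonoid[OF assms(1,2)] assms(5,6)]
    assms(4) by blast

lemma u_represents_rank_le_multiple:
  fixes \<delta> :: "'q::finite \<Rightarrow> 'a \<Rightarrow> 'q"
  assumes W: "wedderburn \<delta> k ns \<phi>" "i < k"
    and I: "zero_minimal_ideal (range (theta \<delta> \<phi> i)) (0\<^sub>m (ns i) (ns i)) I"
    and rep: "u_represents \<delta> ns \<phi> u i I w g"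
    and h: "h = theta \<delta> \<phi> i a * g * theta \<delta> \<phi> i b" "h \<in> I" "h \<noteq> 0\<^sub>m (ns i) (ns i)"
    and w': "w' \<in> factors u" "theta \<delta> \<phi> i w' = h"
  shows "rk \<delta> (a @ w @ b) \<le> rk \<delta> w'"
proof -
  have "g \<in> I"
    using rep unfolding u_represents_def by simp
  then obtain c d where g: "g = theta \<delta> \<phi> i c * h * theta \<delta> \<phi> i d"
    using theta_ideal_generator[OF W I _ h(2,3)] by blast
  have "g \<noteq> 0\<^sub>m (ns i) (ns i)"
    using h(1,3) theta_carrier_mat[OF W, of a] theta_carrier_mat[OF W, of b] by auto
  moreover have "theta \<delta> \<phi> i (c @ w' @ d) = g"
    unfolding theta_append3[OF W] g w'(2) ..
  ultimately have "rk \<delta> w \<le> rk \<delta> (c @ w' @ d)"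
    using rep append_in_factors[OF w'(1)] unfolding u_represents_def by blast
  then show ?thesis
    using rk_append_le[of \<delta> a w b] rk_append_le[of \<delta> c w' d] by linarith
qed

theorem mainTheorem6:
  fixes \<delta> :: "'q::finite \<Rightarrow> 'a::finite \<Rightarrow> 'q"
    and k :: nat and ns :: "nat \<Rightarrow> nat"
    and \<phi> :: "'q cop \<Rightarrow> nat \<Rightarrow> complex mat"
    and I :: "complex mat set" and g :: "complex mat" and i :: nat
    and v u w a b :: "'a list"
  assumes "synchronizing \<delta>"
    and "wedderburn \<delta> k ns \<phi>"
    and "v_minimal \<delta> k ns \<phi> v u"
    and "i \<in> supp \<delta> k ns \<phi> u"
    and "zero_minimal_ideal (range (theta \<delta> \<phi> i)) (0\<^sub>m (ns i) (ns i)) I"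
    and "u_represents \<delta> ns \<phi> u i I w g"
  shows "u_represents \<delta> ns \<phi> u i I (a @ w @ b) (theta \<delta> \<phi> i a * g * theta \<delta> \<phi> i b)"
proof -
  define h where "h = theta \<delta> \<phi> i a * g * theta \<delta> \<phi> i b"
  have "i < k"
    using assms(4) unfolding supp_def by simp
  have rep: "g \<in> I" "w \<in> factors u" "theta \<delta> \<phi> i w = g"
    using assms(6) unfolding u_represents_def by auto
  have "h \<in> I"
    using assms(5) rep(1) unfolding h_def zero_minimal_ideal_def by (blast intro: mon_ideal_mult)
  moreover have "theta \<delta> \<phi> i (a @ w @ b) = h"
    unfolding h_def theta_append3[OF assms(2) \<open>i < k\<close>] rep(3) ..
  moreover note u_represents_rank_le_multiple[OF assms(2) \<open>i < k\<close> assms(5,6) h_def \<open>h \<in> I\<close>]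
  ultimately show ?thesis
    unfolding u_represents_def h_def[symmetric] using append_in_factors[OF rep(2)] by blast
qed

end
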